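(* Let $x, y, a, b$ be positive integers. Then there exists an amicable pair of lattice parallelograms, one with side lengths $x$ and $y$ and the other with side lengths $a$ and $b$, if and only if both $x^2y^2 - 4(a+b)^2$ and $a^2b^2 - 4(x+y)^2$ are squares of integers (zero allowed).
   Context: A lattice parallelogram is a parallelogram all of whose vertices lie on the integer lattice $\mathbb{Z}^2$. Two polygons form an amicable pair if the area of each equals the perimeter of the other (the two polygons are not required to be distinct). A parallelogram "with side lengths $x$ and $y$" has two sides of length $x$ and two sides of length $y$. *)

theory Defs
  imports Complex_Main
begin

type_synonym lpoint = "int \<times> int"

definition seglen :: "lpoint \<Rightarrow> lpoint \<Rightarrow> real" where
  "seglen P Q = sqrt (real_of_int ((fst Q - fst P)^2 + (snd Q - snd P)^2))"

definition lattice_parallelogram :: "lpoint \<Rightarrow> lpoint \<Rightarrow> lpoint \<Rightarrow> lpoint \<Rightarrow> bool" where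
  "lattice_parallelogram A B C D \<longleftrightarrow>
     fst A + fst C = fst B + fst D \<and> snd A + snd C = snd B + snd D \<and>
     (fst B - fst A) * (snd D - snd A) - (snd B - snd A) * (fst D - fst A) \<noteq> 0"

definition par_area :: "lpoint \<Rightarrow> lpoint \<Rightarrow> lpoint \<Rightarrow> lpoint \<Rightarrow> real" where
  "par_area A B C D =
     real_of_int \<bar>(fst B - fst A) * (snd D - snd A) - (snd B - snd A) * (fst D - fst A)\<bar>"

definition par_perimeter :: "lpoint \<Rightarrow> lpoint \<Rightarrow> lpoint \<Rightarrow> lpoint \<Rightarrow> real" where
  "par_perimeter A B C D = seglen A B + seglen B C + seglen C D + seglen D A"

definition has_side_lengths :: "lpoint \<Rightarrow> lpoint \<Rightarrow> lpoint \<Rightarrow> lpoint \<Rightarrow> real \<Rightarrow> real \<Rightarrow> bool" where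
  "has_side_lengths A B C D x y \<longleftrightarrow>
     (seglen A B = x \<and> seglen B C = y \<and> seglen C D = x \<and> seglen D A = y) \<or>
     (seglen A B = y \<and> seglen B C = x \<and> seglen C D = y \<and> seglen D A = x)"

definition amicable_par ::
  "lpoint \<Rightarrow> lpoint \<Rightarrow> lpoint \<Rightarrow> lpoint \<Rightarrow> lpoint \<Rightarrow> lpoint \<Rightarrow> lpoint \<Rightarrow> lpoint \<Rightarrow> bool" where
  "amicable_par A B C D E F G H \<longleftrightarrow>
     par_area A B C D = par_perimeter E F G H \<and> par_area E F G H = par_perimeter A B C D"

end

theory Submission
  imports Defs "HOL-Computational_Algebra.Primes"
begin

text \<open>
  Opposite sides of a parallelogram have equal length, so a lattice parallelogram with
  side lengths \<open>x\<close> and \<open>y\<close> has perimeter \<open>2(x + y)\<close>, and the amicable condition prescribes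
  the areas \<open>2(a + b)\<close> and \<open>2(x + y)\<close>. Hence it suffices to show: a lattice parallelogram
  with integer side lengths \<open>x, y\<close> and area \<open>k > 0\<close> exists iff \<open>x\<^sup>2y\<^sup>2 - k\<^sup>2\<close> is a square.
  If the edge vectors are \<open>u\<close> and \<open>v\<close>, Lagrange's identity
  \<open>|u|\<^sup>2|v|\<^sup>2 = (u\<cdot>v)\<^sup>2 + (u\<times>v)\<^sup>2\<close> gives necessity. Conversely, if \<open>m\<^sup>2 + k\<^sup>2 = (xy)\<^sup>2\<close>,
  the Gaussian integer \<open>m + ki\<close> of norm \<open>x\<^sup>2y\<^sup>2\<close> factors as \<open>de\<close> with \<open>N(d) = x\<^sup>2\<close>,
  \<open>N(e) = y\<^sup>2\<close>; the vectors \<open>conj d\<close> and \<open>e\<close> then have lengths \<open>x\<close>, \<open>y\<close> and cross product \<open>k\<close>.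
  The factorisation is built prime by prime: for a rational prime \<open>p\<close> with \<open>p\<^sup>2 | N(w)\<close>,
  the Euclidean algorithm in \<open>\<int>[i]\<close> produces a divisor of \<open>w\<close> of norm \<open>p\<^sup>2\<close>.
\<close>

datatype gauss_int = Gauss (gre: int) (gim: int)

instantiation gauss_int :: comm_ring_1
begin

definition "0 = Gauss 0 0"
definition "1 = Gauss 1 0"
definition "z + w = Gauss (gre z + gre w) (gim z + gim w)"
definition "z - w = Gauss (gre z - gre w) (gim z - gim w)"
definition "- z = Gauss (- gre z) (- gim z)"
definition "z * w = Gauss (gre z * gre w - gim z * gim w) (gre z * gim w + gim z * gre w)"

instance
  by standard (auto simp: zero_gauss_int_def one_gauss_int_def plus_gauss_int_def
      minus_gauss_int_def uminus_gauss_int_def times_gauss_int_def gauss_int.expand algebra_simps)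

end

lemma gauss_int_simps [simp]:
  "gre 0 = 0" "gim 0 = 0" "gre 1 = 1" "gim 1 = 0"
  "gre (z + w) = gre z + gre w" "gim (z + w) = gim z + gim w"
  "gre (z - w) = gre z - gre w" "gim (z - w) = gim z - gim w"
  "gre (z * w) = gre z * gre w - gim z * gim w" "gim (z * w) = gre z * gim w + gim z * gre w"
  by (simp_all add: zero_gauss_int_def one_gauss_int_def plus_gauss_int_def
      minus_gauss_int_def times_gauss_int_def)

lemma gauss_int_eqI: "gre z = gre w \<Longrightarrow> gim z = gim w \<Longrightarrow> z = w"
  by (simp add: gauss_int.expand)

lemma gauss_of_int: "of_int n = Gauss n 0"
  by (induction n rule: int_induct[where k = 0]) (auto intro: gauss_int_eqI simp: zero_gauss_int_def)

definition gnorm :: "gauss_int \<Rightarrow> int" where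
  "gnorm z = (gre z)\<^sup>2 + (gim z)\<^sup>2"

definition gcnj :: "gauss_int \<Rightarrow> gauss_int" where
  "gcnj z = Gauss (gre z) (- gim z)"

lemma gnorm_Gauss [simp]: "gnorm (Gauss a b) = a\<^sup>2 + b\<^sup>2"
  by (simp add: gnorm_def)

lemma gnorm_nonneg: "gnorm z \<ge> 0"
  by (simp add: gnorm_def)

lemma gnorm_eq_0_iff: "gnorm z = 0 \<longleftrightarrow> z = 0"
  by (auto simp: gnorm_def gauss_int.expand)

lemma gnorm_mult: "gnorm (z * w) = gnorm z * gnorm w"
  by (simp add: gnorm_def algebra_simps power2_eq_square)

lemma gnorm_one [simp]: "gnorm 1 = 1"
  by (simp add: gnorm_def)

lemma gnorm_of_int [simp]: "gnorm (of_int n) = n\<^sup>2"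
  by (simp add: gauss_of_int)

lemma gnorm_dvd: "z dvd w \<Longrightarrow> gnorm z dvd gnorm w"
  by (auto simp: gnorm_mult)

lemma gcnj_add: "gcnj (z + w) = gcnj z + gcnj w"
  by (rule gauss_int_eqI) (simp_all add: gcnj_def)

lemma gcnj_mult: "gcnj (z * w) = gcnj z * gcnj w"
  by (rule gauss_int_eqI) (simp_all add: gcnj_def)

lemma gcnj_of_int [simp]: "gcnj (of_int n) = of_int n"
  by (simp add: gcnj_def gauss_of_int)

lemma gnorm_gcnj [simp]: "gnorm (gcnj z) = gnorm z"
  by (simp add: gcnj_def gnorm_def)

lemma mult_gcnj: "z * gcnj z = of_int (gnorm z)"
  by (rule gauss_int_eqI) (simp_all add: gcnj_def gnorm_def gauss_of_int power2_eq_square)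

lemma exists_nearest_multiple:
  fixes c n :: int
  assumes "n > 0"
  shows "\<exists>q. 2 * \<bar>c - n * q\<bar> \<le> n"
proof -
  define q where "q = (2 * c + n) div (2 * n)"
  define r where "r = (2 * c + n) mod (2 * n)"
  have "2 * c + n = 2 * n * q + r"
    unfolding q_def r_def by simp
  moreover have "0 \<le> r" "r < 2 * n"
    unfolding r_def using assms by simp_all
  ultimately have "2 * (c - n * q) = r - n"
    by (simp add: algebra_simps)
  with \<open>0 \<le> r\<close> \<open>r < 2 * n\<close> have "2 * \<bar>c - n * q\<bar> \<le> n"
    by arith
  then show ?thesis ..
qed

lemma gauss_int_division:
  assumes "b \<noteq> 0"
  shows "\<exists>q r. a = b * q + r \<and> gnorm r < gnorm b"
proof -
  define n where "n = gnorm b"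
  have n_pos: "n > 0"
    using assms gnorm_nonneg[of b] gnorm_eq_0_iff[of b] unfolding n_def by linarith
  define c where "c = a * gcnj b"
  obtain q1 where q1: "2 * \<bar>gre c - n * q1\<bar> \<le> n"
    using exists_nearest_multiple n_pos by blast
  obtain q2 where q2: "2 * \<bar>gim c - n * q2\<bar> \<le> n"
    using exists_nearest_multiple n_pos by blast
  define q where "q = Gauss q1 q2"
  define r where "r = a - b * q"
  have "r * gcnj b = c - of_int n * q"
    unfolding r_def c_def n_def by (simp add: mult_gcnj [symmetric] algebra_simps)
  then have "gnorm r * n = gnorm (c - of_int n * q)"
    by (metis gnorm_mult gnorm_gcnj n_def)
  also have "\<dots> = (gre c - n * q1)\<^sup>2 + (gim c - n * q2)\<^sup>2"
    by (simp add: gnorm_def gauss_of_int q_def)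
  finally have norm_eq: "gnorm r * n = (gre c - n * q1)\<^sup>2 + (gim c - n * q2)\<^sup>2" .
  have square_bound: "4 * t\<^sup>2 \<le> n\<^sup>2" if "2 * \<bar>t\<bar> \<le> n" for t
  proof -
    have "(2 * \<bar>t\<bar>)\<^sup>2 \<le> n\<^sup>2"
      using that by (intro power_mono) auto
    then show ?thesis
      by (simp add: power_mult_distrib)
  qed
  have "4 * (gnorm r * n) \<le> 2 * n\<^sup>2"
    unfolding norm_eq distrib_left using square_bound[OF q1] square_bound[OF q2] by linarith
  then have "2 * gnorm r \<le> n"
    using n_pos by (simp add: power2_eq_square)
  then have "gnorm r < n"
    using n_pos by linarith
  moreover have "a = b * q + r"
    by (simp add: r_def)
  ultimately show ?thesis
    unfolding n_def by blast
qed

lemma gauss_int_bezout: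
  fixes a b :: gauss_int
  shows "\<exists>d s t. d dvd a \<and> d dvd b \<and> d = a * s + b * t"
proof (induction "nat (gnorm b)" arbitrary: a b rule: less_induct)
  case less
  show ?case
  proof (cases "b = 0")
    case True
    then show ?thesis by (intro exI[of _ a] exI[of _ 1] exI[of _ 0]) simp
  next
    case False
    then obtain q r where qr: "a = b * q + r" "gnorm r < gnorm b"
      using gauss_int_division by blast
    then have "nat (gnorm r) < nat (gnorm b)"
      using gnorm_nonneg[of r] by simp
    then obtain d s t where d: "d dvd b" "d dvd r" "d = b * s + r * t"
      using less by blast
    have "d dvd a"
      using d qr(1) by simp
    moreover have "d = a * t + b * (s - q * t)"
      using d(3) qr(1) by (simp add: algebra_simps)
    ultimately show ?thesis
      using d by blast
  qed
qed

lemma dvd_prime_square_cases: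
  fixes p k :: int
  assumes "prime p" "k \<ge> 0" "k dvd p\<^sup>2"
  shows "k = 1 \<or> k = p \<or> k = p\<^sup>2"
proof -
  obtain m where "m \<le> 2" "normalize k = p ^ m"
    using divides_primepow[OF assms(1,3)] by blast
  moreover have "normalize k = k"
    using assms(2) by simp
  ultimately show ?thesis
    by (cases m) (auto simp: le_Suc_eq numeral_2_eq_2)
qed

lemma gauss_int_divisor_of_prime_norm:
  fixes p :: int
  assumes p: "prime p" and "p dvd gnorm z"
  shows "\<exists>\<rho>. \<rho> dvd z \<and> (gnorm \<rho> = p \<or> gnorm \<rho> = p\<^sup>2)"
proof -
  obtain d s t where d: "d dvd z" "d dvd of_int p" "d = z * s + of_int p * t"
    using gauss_int_bezout by blast
  have "gnorm d dvd p\<^sup>2"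
    using gnorm_dvd[OF d(2)] by simp
  then have norm_cases: "gnorm d = 1 \<or> gnorm d = p \<or> gnorm d = p\<^sup>2"
    using dvd_prime_square_cases[OF p gnorm_nonneg] by blast
  have "gnorm d \<noteq> 1"
  proof
    assume "gnorm d = 1"
    \<comment> \<open>then \<open>1 = d \<cdot> conj d \<equiv> N(z) \<cdot> N(s) \<equiv> 0 (mod p)\<close>\<close>
    have expand: "d * gcnj d = (z * gcnj z) * (s * gcnj s) + of_int p * (z * s * gcnj t + t * gcnj d)"
      by (simp add: d(3) gcnj_add gcnj_mult algebra_simps)
    have "of_int p dvd z * gcnj z"
      using assms(2) by (auto simp: mult_gcnj)
    then have "of_int p dvd d * gcnj d"
      unfolding expand by (metis dvd_add dvd_mult2 dvd_triv_left)
    then have "of_int p dvd (1 :: gauss_int)"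
      using \<open>gnorm d = 1\<close> by (simp add: mult_gcnj)
    then have "is_unit (p\<^sup>2)"
      using gnorm_dvd by fastforce
    then show False
      using p by (simp add: not_prime_unit)
  qed
  then show ?thesis
    using norm_cases d(1) by blast
qed

lemma gauss_int_divisor_of_prime_square_norm:
  fixes p :: int
  assumes p: "prime p" and "p\<^sup>2 dvd gnorm w"
  shows "\<exists>\<delta>. \<delta> dvd w \<and> gnorm \<delta> = p\<^sup>2"
proof -
  have "p dvd gnorm w"
    using assms(2) by (simp add: power2_eq_square dvd_mult_left)
  then obtain \<rho> where \<rho>: "\<rho> dvd w" "gnorm \<rho> = p \<or> gnorm \<rho> = p\<^sup>2"
    using gauss_int_divisor_of_prime_norm[OF p] by blast
  show ?thesis
  proof (cases "gnorm \<rho> = p")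
    case True
    obtain w' where w': "w = \<rho> * w'"
      using \<rho>(1) by blast
    have "p * p dvd p * gnorm w'"
      using assms(2) by (simp add: w' gnorm_mult True power2_eq_square)
    then have "p dvd gnorm w'"
      using p by (simp add: prime_gt_0_int)
    then obtain \<sigma> where \<sigma>: "\<sigma> dvd w'" "gnorm \<sigma> = p \<or> gnorm \<sigma> = p\<^sup>2"
      using gauss_int_divisor_of_prime_norm[OF p] by blast
    have "\<rho> * \<sigma> dvd w" "\<sigma> dvd w"
      using \<sigma>(1) by (simp_all add: w' mult_dvd_mono)
    moreover have "gnorm (\<rho> * \<sigma>) = p\<^sup>2" if "gnorm \<sigma> = p"
      using that True by (simp add: gnorm_mult power2_eq_square)
    ultimately show ?thesis
      using \<sigma>(2) by blast
  qed (use \<rho> in blast)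
qed

lemma gauss_int_factor_by_norm:
  fixes x :: int
  assumes "x \<noteq> 0" "gnorm w = x\<^sup>2 * c"
  shows "\<exists>d e. w = d * e \<and> gnorm d = x\<^sup>2 \<and> gnorm e = c"
  using assms
proof (induction x arbitrary: w rule: prime_divisors_induct)
  case zero
  then show ?case by simp
next
  case (unit x)
  then have "\<bar>x\<bar> = 1"
    by simp
  then have "x\<^sup>2 = 1"
    by (metis power2_abs one_power2)
  then show ?case
    using unit.prems by (intro exI[of _ 1] exI[of _ w]) simp
next
  case (factor p x)
  have "p\<^sup>2 dvd gnorm w"
    using factor.prems(2) by (simp add: power_mult_distrib)
  then obtain \<delta> where \<delta>: "\<delta> dvd w" "gnorm \<delta> = p\<^sup>2"
    using gauss_int_divisor_of_prime_square_norm[OF factor.hyps] by blast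
  then obtain w' where w': "w = \<delta> * w'"
    by blast
  have "p\<^sup>2 * gnorm w' = p\<^sup>2 * (x\<^sup>2 * c)"
    using factor.prems(2) \<delta>(2) by (simp add: w' gnorm_mult power_mult_distrib)
  then have "gnorm w' = x\<^sup>2 * c"
    using factor.prems(1) by simp
  moreover have "x \<noteq> 0"
    using factor.prems(1) by simp
  ultimately obtain d e where "w' = d * e" "gnorm d = x\<^sup>2" "gnorm e = c"
    using factor.IH by blast
  then show ?case
    using w' \<delta>(2) by (intro exI[of _ "\<delta> * d"] exI[of _ e]) (simp add: gnorm_mult power_mult_distrib)
qed

lemma lagrange_identity:
  fixes u1 u2 v1 v2 :: "'a :: comm_ring_1"
  shows "(u1\<^sup>2 + u2\<^sup>2) * (v1\<^sup>2 + v2\<^sup>2) = (u1 * v1 + u2 * v2)\<^sup>2 + (u1 * v2 - u2 * v1)\<^sup>2"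
  by (simp add: algebra_simps power2_eq_square)

lemma vectors_with_lengths_and_cross_product:
  fixes x y k m :: int
  assumes "x \<noteq> 0" "x\<^sup>2 * y\<^sup>2 - k\<^sup>2 = m\<^sup>2"
  shows "\<exists>u1 u2 v1 v2. u1\<^sup>2 + u2\<^sup>2 = x\<^sup>2 \<and> v1\<^sup>2 + v2\<^sup>2 = y\<^sup>2 \<and> u1 * v2 - u2 * v1 = k"
proof -
  have "gnorm (Gauss m k) = x\<^sup>2 * y\<^sup>2"
    using assms(2) by simp
  then obtain d e where de: "Gauss m k = d * e" "gnorm d = x\<^sup>2" "gnorm e = y\<^sup>2"
    using gauss_int_factor_by_norm[OF assms(1)] by blast
  have "k = gim (d * e)"
    by (simp flip: de(1))
  then show ?thesis
    using de(2,3) unfolding gnorm_def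
    by (intro exI[of _ "gre d"] exI[of _ "- gim d"] exI[of _ "gre e"] exI[of _ "gim e"]) simp
qed

lemma seglen_eq_of_int_iff:
  assumes "s \<ge> 0"
  shows "seglen P Q = of_int s \<longleftrightarrow> (fst Q - fst P)\<^sup>2 + (snd Q - snd P)\<^sup>2 = s\<^sup>2"
proof -
  define t where "t = (fst Q - fst P)\<^sup>2 + (snd Q - snd P)\<^sup>2"
  have "seglen P Q = of_int s \<longleftrightarrow> sqrt (of_int t) = of_int s"
    by (simp add: seglen_def t_def)
  also have "\<dots> \<longleftrightarrow> sqrt (of_int t) = sqrt ((of_int s)\<^sup>2)"
    using assms by simp
  also have "\<dots> \<longleftrightarrow> of_int t = (of_int s :: real)\<^sup>2"
    by (rule real_sqrt_eq_iff)
  also have "\<dots> \<longleftrightarrow> t = s\<^sup>2"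
    by (metis of_int_eq_iff of_int_power)
  finally show ?thesis
    unfolding t_def .
qed

lemma par_perimeter_side_lengths:
  "has_side_lengths A B C D x y \<Longrightarrow> par_perimeter A B C D = 2 * (x + y)"
  by (auto simp: has_side_lengths_def par_perimeter_def)

lemma side_lengths_area_imp_square:
  fixes x y k :: int
  assumes sides: "has_side_lengths A B C D (of_int x) (of_int y)" and "x > 0" "y > 0"
    and area: "par_area A B C D = of_int k"
  shows "\<exists>m. x\<^sup>2 * y\<^sup>2 - k\<^sup>2 = m\<^sup>2"
proof -
  define u1 where "u1 = fst B - fst A"
  define u2 where "u2 = snd B - snd A"
  define v1 where "v1 = fst D - fst A"
  define v2 where "v2 = snd D - snd A"
  have "seglen D A = seglen A D"
    by (simp add: seglen_def power2_commute)
  then have "(u1\<^sup>2 + u2\<^sup>2) * (v1\<^sup>2 + v2\<^sup>2) = x\<^sup>2 * y\<^sup>2"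
    using sides assms(2,3) unfolding has_side_lengths_def u1_def u2_def v1_def v2_def
    by (auto simp: seglen_eq_of_int_iff)
  moreover have "k\<^sup>2 = (u1 * v2 - u2 * v1)\<^sup>2"
    using area unfolding par_area_def u1_def u2_def v1_def v2_def
    by (metis of_int_eq_iff power2_abs)
  ultimately show ?thesis
    by (metis lagrange_identity add_diff_cancel_right')
qed

lemma lattice_parallelogram_from_square:
  fixes x y k m :: int
  assumes "x > 0" "y > 0" "k > 0" "x\<^sup>2 * y\<^sup>2 - k\<^sup>2 = m\<^sup>2"
  shows "\<exists>A B C D. lattice_parallelogram A B C D \<and>
    has_side_lengths A B C D (of_int x) (of_int y) \<and> par_area A B C D = of_int k"
proof -
  obtain u1 u2 v1 v2 where u: "u1\<^sup>2 + u2\<^sup>2 = x\<^sup>2" "v1\<^sup>2 + v2\<^sup>2 = y\<^sup>2" "u1 * v2 - u2 * v1 = k"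
    using vectors_with_lengths_and_cross_product[OF _ assms(4)] assms(1) by auto
  define A :: lpoint where "A = (0, 0)"
  define B :: lpoint where "B = (u1, u2)"
  define C :: lpoint where "C = (u1 + v1, u2 + v2)"
  define D :: lpoint where "D = (v1, v2)"
  have "lattice_parallelogram A B C D"
    unfolding lattice_parallelogram_def A_def B_def C_def D_def using u(3) assms(3) by simp
  moreover have "has_side_lengths A B C D (of_int x) (of_int y)"
    using u assms(1,2)
    by (simp add: has_side_lengths_def seglen_eq_of_int_iff A_def B_def C_def D_def power2_commute)
  moreover have "par_area A B C D = of_int k"
    unfolding par_area_def A_def B_def D_def using u(3) assms(3) by simp
  ultimately show ?thesis
    by blast
qed

lemma lattice_parallelogram_exists_iff:
  fixes x y k :: int
  assumes "x > 0" "y > 0" "k > 0"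
  shows "(\<exists>A B C D. lattice_parallelogram A B C D \<and>
            has_side_lengths A B C D (of_int x) (of_int y) \<and> par_area A B C D = of_int k)
         \<longleftrightarrow> (\<exists>m. x\<^sup>2 * y\<^sup>2 - k\<^sup>2 = m\<^sup>2)"
  using assms side_lengths_area_imp_square lattice_parallelogram_from_square by metis

lemma amicable_lattice_parallelograms_iff:
  "(\<exists>A B C D E F G H.
      lattice_parallelogram A B C D \<and> lattice_parallelogram E F G H \<and>
      has_side_lengths A B C D x y \<and> has_side_lengths E F G H a b \<and>
      amicable_par A B C D E F G H)
   \<longleftrightarrow>
   (\<exists>A B C D. lattice_parallelogram A B C D \<and> has_side_lengths A B C D x y \<and>
      par_area A B C D = 2 * (a + b)) \<and>
   (\<exists>E F G H. lattice_parallelogram E F G H \<and> has_side_lengths E F G H a b \<and>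
      par_area E F G H = 2 * (x + y))"
  (is "?pair \<longleftrightarrow> ?first \<and> ?second")
proof
  assume ?pair
  then obtain A B C D E F G H where
    par: "lattice_parallelogram A B C D" "lattice_parallelogram E F G H" and
    sides: "has_side_lengths A B C D x y" "has_side_lengths E F G H a b" and
    "amicable_par A B C D E F G H"
    by blast
  then have "par_area A B C D = 2 * (a + b)" "par_area E F G H = 2 * (x + y)"
    by (simp_all add: amicable_par_def par_perimeter_side_lengths)
  with par sides show "?first \<and> ?second"
    by blast
next
  assume "?first \<and> ?second"
  then obtain A B C D E F G H where
    par: "lattice_parallelogram A B C D" "lattice_parallelogram E F G H" and
    sides: "has_side_lengths A B C D x y" "has_side_lengths E F G H a b" and
    "par_area A B C D = 2 * (a + b)" "par_area E F G H = 2 * (x + y)"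
    by blast
  then have "amicable_par A B C D E F G H"
    by (simp add: amicable_par_def par_perimeter_side_lengths)
  with par sides show ?pair
    by blast
qed

theorem theorem1:
  fixes x y a b :: int
  assumes "x > 0" "y > 0" "a > 0" "b > 0"
  shows "(\<exists>A B C D E F G H.
            lattice_parallelogram A B C D \<and> lattice_parallelogram E F G H \<and>
            has_side_lengths A B C D (real_of_int x) (real_of_int y) \<and>
            has_side_lengths E F G H (real_of_int a) (real_of_int b) \<and>
            amicable_par A B C D E F G H)
         \<longleftrightarrow>
         (\<exists>m::int. x^2 * y^2 - 4 * (a + b)^2 = m^2) \<and>
         (\<exists>n::int. a^2 * b^2 - 4 * (x + y)^2 = n^2)"
  unfolding amicable_lattice_parallelograms_iff
  using lattice_parallelogram_exists_iff[of x y "2 * (a + b)", unfolded power_mult_distrib]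
    lattice_parallelogram_exists_iff[of a b "2 * (x + y)", unfolded power_mult_distrib] assms
  by simp

end
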